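(* Let $\lambda>0$ and $0<\nu<2$. Let $u_\nu$ be the solution of $\frac{\partial^{\nu}u}{\partial t^{\nu}}=\lambda^2\frac{\partial^2u}{\partial x^2}$, $x\in\mathbb{R}$, $t>0$, with $u(x,0)=\delta(x)$ if $0<\nu\le1$ and $u(x,0)=\delta(x)$, $u_t(x,0)=0$ if $1<\nu<2$. Then for $x\neq0$, \[ u_\nu(x,t)=\frac{1}{\pi\nu|x|}\int_0^{+\infty}e^{-w}\,e^{-\frac{|x|w^{\nu/2}}{\lambda t^{\nu/2}}\cos\frac{\nu\pi}{2}}\sin\!\left(\frac{|x|w^{\nu/2}}{\lambda t^{\nu/2}}\sin\frac{\nu\pi}{2}\right)dw. \]
   Context: Fractional derivatives are in the Dzherbashyan–Caputo sense: for $m-1<\nu<m$, $\frac{\partial^{\nu}u}{\partial t^{\nu}}(x,t)=\frac{1}{\Gamma(m-\nu)}\int_0^t (t-s)^{m-\nu-1}\frac{\partial^m u}{\partial s^m}(x,s)\,ds$; for $\nu=m$ the ordinary derivative. The solution is $u_\nu(x,t)=\frac{1}{2\lambda t^{\nu/2}}\sum_{k\ge0}\frac{(-|x|/(\lambda t^{\nu/2}))^k}{k!\,\Gamma(-\nu k/2+1-\nu/2)}$. *)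

theory Defs
  imports "HOL-Analysis.Analysis"
begin

text \<open>The reciprocal Gamma function is the entire function rGamma
  (so the terms at poles of Gamma vanish, as in 1/Gamma).\<close>
definition u_sol :: "real \<Rightarrow> real \<Rightarrow> real \<Rightarrow> real \<Rightarrow> real" where
  "u_sol \<nu> lam x t =
     1 / (2 * lam * t powr (\<nu>/2)) *
     (\<Sum>k. (- \<bar>x\<bar> / (lam * t powr (\<nu>/2))) ^ k / fact k
            * rGamma (- \<nu> * real k / 2 + 1 - \<nu> / 2))"

end

theory Submission
  imports Defs
begin

text \<open>Write \<open>a = |x| / (\<lambda> t^(\<nu>/2))\<close>, \<open>\<beta> = \<nu>/2\<close> and \<open>\<phi> = \<pi> - \<nu>\<pi>/2\<close>. The integrand is
  \<open>e^(-w)\<close> times \<open>Im (exp (a w^\<beta> e^(i\<phi>)))\<close>; expanding the exponential and integrating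
  termwise (dominated convergence, since \<open>a w^\<beta> \<le> w/2 + C\<close>) turns the integral into
  \<open>\<Sum> a^n sin (n\<phi>) \<Gamma>(\<beta>n + 1) / n!\<close>. The reflection formula
  \<open>1/\<Gamma>(1 - z) = sin (\<pi>z) \<Gamma>(z + 1) / (\<pi>z)\<close> with \<open>z = \<nu>(k+1)/2\<close> identifies this,
  term by term, with the series defining \<open>u\<^sub>\<nu>\<close>.\<close>

lemma rGamma_one_minus_real:
  fixes z :: real
  assumes "z > 0"
  shows "rGamma (1 - z) = sin (pi * z) * Gamma (z + 1) / (pi * z)"
proof -
  have "complex_of_real (rGamma z * rGamma (1 - z)) = complex_of_real (sin (pi * z) / pi)"
    using rGamma_reflection_complex[of "of_real z"]
    by (simp add: rGamma_complex_of_real[symmetric] sin_of_real[symmetric])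
  then have reflection: "rGamma z * rGamma (1 - z) = sin (pi * z) / pi"
    using of_real_eq_iff by blast
  have "rGamma z = z / Gamma (z + 1)"
    using rGamma_plus1[of z] by (simp add: rGamma_inverse_Gamma field_simps)
  moreover have "Gamma (z + 1) \<noteq> 0"
    using Gamma_real_pos[of "z + 1"] assms by linarith
  ultimately show ?thesis
    using reflection assms by (auto simp: field_simps simp del: Gamma_real_pos)
qed

lemma powr_le_linear_plus_const:
  fixes a \<beta> \<epsilon> :: real
  assumes "a > 0" "0 < \<beta>" "\<beta> < 1" "\<epsilon> > 0"
  obtains C where "\<And>w. w \<ge> 0 \<Longrightarrow> a * w powr \<beta> \<le> \<epsilon> * w + C"
proof
  define W where "W = (a / \<epsilon>) powr (1 / (1 - \<beta>))"
  have "W > 0"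
    using assms by (simp add: W_def)
  have W: "W powr (1 - \<beta>) = a / \<epsilon>"
    using assms by (simp add: W_def powr_powr)
  have "0 \<le> a * W powr \<beta>"
    using assms by simp
  fix w :: real
  assume "w \<ge> 0"
  show "a * w powr \<beta> \<le> \<epsilon> * w + a * W powr \<beta>"
  proof (cases "w \<le> W")
    case True
    then have "a * w powr \<beta> \<le> a * W powr \<beta>"
      using \<open>w \<ge> 0\<close> assms by (intro mult_left_mono powr_mono2) auto
    moreover have "0 \<le> \<epsilon> * w"
      using \<open>w \<ge> 0\<close> assms by simp
    ultimately show ?thesis
      by linarith
  next
    case False
    then have "a / \<epsilon> \<le> w powr (1 - \<beta>)"
      using W \<open>W > 0\<close> assms powr_mono2[of "1 - \<beta>" W w] by simp
    then have "a \<le> \<epsilon> * w powr (1 - \<beta>)"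
      using assms by (simp add: field_simps)
    then have "a * w powr \<beta> \<le> \<epsilon> * (w powr (1 - \<beta>) * w powr \<beta>)"
      unfolding mult.assoc[symmetric] by (rule mult_right_mono) simp_all
    also have "\<dots> = \<epsilon> * w"
      using False \<open>W > 0\<close> by (simp flip: powr_add)
    finally show ?thesis
      using \<open>0 \<le> a * W powr \<beta>\<close> by linarith
  qed
qed

lemma sum_power_div_fact_le_exp:
  fixes y :: real
  assumes "y \<ge> 0"
  shows "(\<Sum>n<N. y ^ n / fact n) \<le> exp y"
proof -
  have "(\<lambda>n. y ^ n / fact n) sums exp y"
    using exp_converges[of y] by (simp add: divide_inverse mult.commute)
  then show ?thesis
    using sum_le_suminf[OF sums_summable, of _ _ "{..<N}"] sums_unique assms by fastforce
qed

lemma sums_power_sin_div_fact: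
  fixes r \<phi> :: real
  shows "(\<lambda>n. r ^ n * sin (real n * \<phi>) / fact n) sums (exp (r * cos \<phi>) * sin (r * sin \<phi>))"
proof -
  define z where "z = rcis r \<phi>"
  have "(\<lambda>n. Im (z ^ n /\<^sub>R fact n)) sums Im (exp z)"
    by (rule sums_Im[OF exp_converges])
  moreover have "Im (z ^ n /\<^sub>R fact n) = r ^ n * sin (real n * \<phi>) / fact n" for n
    unfolding z_def DeMoivre2 by (simp add: divide_inverse mult.commute)
  moreover have "Im (exp z) = exp (r * cos \<phi>) * sin (r * sin \<phi>)"
    unfolding Im_exp z_def by simp
  ultimately show ?thesis
    by simp
qed

lemma sums_integral_dominated:
  fixes g :: "nat \<Rightarrow> 'n::euclidean_space \<Rightarrow> 'm::euclidean_space"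
  assumes g: "\<And>n. (g n has_integral I n) S"
    and h: "h integrable_on S"
    and le: "\<And>N x. x \<in> S \<Longrightarrow> norm (\<Sum>n<N. g n x) \<le> h x"
    and sums: "\<And>x. x \<in> S \<Longrightarrow> (\<lambda>n. g n x) sums f x"
  shows "f integrable_on S" "I sums integral S f"
proof -
  have partial: "((\<lambda>x. \<Sum>n<N. g n x) has_integral (\<Sum>n<N. I n)) S" for N
    by (rule has_integral_sum) (auto intro: g)
  have "f integrable_on S"
    and "(\<lambda>N. integral S (\<lambda>x. \<Sum>n<N. g n x)) \<longlonglongrightarrow> integral S f"
    using dominated_convergence[of "\<lambda>N x. \<Sum>n<N. g n x" S h f] partial h le sums
    by (auto simp: sums_def)
  then show "f integrable_on S" "I sums integral S f"
    unfolding sums_def integral_unique[OF partial] by simp_all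
qed

lemma integral_exp_sin_powr_sums:
  fixes a \<beta> \<phi> :: real
  assumes "a > 0" "0 < \<beta>" "\<beta> < 1"
  defines "f \<equiv> \<lambda>w. exp (- w) * exp (a * w powr \<beta> * cos \<phi>) * sin (a * w powr \<beta> * sin \<phi>)"
  shows "f integrable_on {0..}"
    and "(\<lambda>n. a ^ n * sin (real n * \<phi>) / fact n * Gamma (\<beta> * real n + 1)) sums integral {0..} f"
proof -
  define g where "g n w = (a * w powr \<beta>) ^ n * sin (real n * \<phi>) / fact n / exp w" for n w
  define c where "c n = a ^ n * sin (real n * \<phi>) / fact n" for n
  have integral_g: "(g n has_integral c n * Gamma (\<beta> * real n + 1)) {0..}" for n
  proof -
    have "((\<lambda>w. w powr (\<beta> * real n) / exp w) has_integral Gamma (\<beta> * real n + 1)) {0..}"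
      using Gamma_integral_real[of "\<beta> * real n + 1"] assms
      by (simp add: add_nonneg_pos)
    then have integral: "((\<lambda>w. c n * (w powr (\<beta> * real n) / exp w))
        has_integral c n * Gamma (\<beta> * real n + 1)) {0..}"
      by (rule has_integral_mult_right)
    have g_eq: "g n w = c n * (w powr (\<beta> * real n) / exp w)" if "w \<in> {0..}" for w
    proof (cases "w = 0")
      case True
      then show ?thesis
        by (cases n) (simp_all add: g_def c_def)
    next
      case False
      have "(w powr \<beta>) ^ n = w powr (\<beta> * real n)"
        using powr_power[OF False] by (simp add: mult.commute)
      then show ?thesis
        by (simp add: g_def c_def power_mult_distrib)
    qed
    show ?thesis
      using has_integral_cong[of "{0..}" "g n", OF g_eq] integral by simp
  qed
  obtain C where C: "\<And>w. w \<ge> 0 \<Longrightarrow> a * w powr \<beta> \<le> 1/2 * w + C"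
    using powr_le_linear_plus_const[of a \<beta> "1/2"] assms by auto
  define h where "h w = exp C * exp (- (1/2) * w)" for w
  have integrable_h: "h integrable_on {0..}"
    unfolding h_def by (intro integrable_on_mult_right integrable_on_exp_minus_to_infinity) simp
  have term_bound: "norm (g n w) \<le> (a * w powr \<beta>) ^ n / fact n / exp w" for n w
    unfolding g_def using \<open>a > 0\<close>
    by (auto simp: abs_mult intro!: divide_right_mono mult_left_le abs_sin_le_one)
  then have dominated: "norm (\<Sum>n<N. g n w) \<le> h w" if "w \<in> {0..}" for N w
  proof -
    have "norm (\<Sum>n<N. g n w) \<le> (\<Sum>n<N. (a * w powr \<beta>) ^ n / fact n) / exp w"
      unfolding sum_divide_distrib by (intro sum_norm_le term_bound)
    also have "\<dots> \<le> exp (a * w powr \<beta>) / exp w"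
      using \<open>a > 0\<close> by (intro divide_right_mono sum_power_div_fact_le_exp) auto
    also have "\<dots> \<le> h w"
      using C[of w] that by (simp add: h_def flip: exp_add exp_diff)
    finally show ?thesis .
  qed
  have "(\<lambda>n. g n w) sums f w" for w
  proof -
    have f_eq: "f w = exp (a * w powr \<beta> * cos \<phi>) * sin (a * w powr \<beta> * sin \<phi>) / exp w"
      by (simp add: f_def exp_minus field_simps)
    show ?thesis
      unfolding g_def f_eq by (rule sums_divide[OF sums_power_sin_div_fact])
  qed
  then show "f integrable_on {0..}"
    and "(\<lambda>n. a ^ n * sin (real n * \<phi>) / fact n * Gamma (\<beta> * real n + 1)) sums integral {0..} f"
    using sums_integral_dominated[OF integral_g integrable_h dominated] by (simp_all add: c_def)
qed

lemma power_div_fact_rGamma_eq: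
  fixes a \<nu> :: real
  assumes "a \<noteq> 0" "\<nu> > 0"
  shows "(- a) ^ k / fact k * rGamma (- \<nu> * real k / 2 + 1 - \<nu> / 2)
    = 2 / (a * pi * \<nu>) * (a ^ Suc k * sin (real (Suc k) * (pi - \<nu> * pi / 2)) / fact (Suc k)
        * Gamma (\<nu> / 2 * real (Suc k) + 1))"
proof -
  define z where "z = \<nu> * real (Suc k) / 2"
  have "z > 0"
    using assms by (simp add: z_def)
  have "- \<nu> * real k / 2 + 1 - \<nu> / 2 = 1 - z"
    by (simp add: z_def field_simps)
  then have rGamma_eq:
      "rGamma (- \<nu> * real k / 2 + 1 - \<nu> / 2) = sin (pi * z) * Gamma (z + 1) / (pi * z)"
    using rGamma_one_minus_real[OF \<open>z > 0\<close>] by (simp only:)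
  have sin_eq: "sin (real (Suc k) * (pi - \<nu> * pi / 2)) = (- 1) ^ k * sin (pi * z)"
  proof -
    have "real (Suc k) * (pi - \<nu> * pi / 2) = real (Suc k) * pi - pi * z"
      by (simp add: z_def algebra_simps)
    then show ?thesis
      by (simp add: sin_diff del: of_nat_Suc)
  qed
  have Gamma_eq: "\<nu> / 2 * real (Suc k) + 1 = z + 1"
    by (simp add: z_def)
  have scale: "2 / (a * pi * \<nu>) * a / real (Suc k) = 1 / (pi * z)"
    using assms by (simp add: z_def)
  have "2 / (a * pi * \<nu>) * (a ^ Suc k * sin (real (Suc k) * (pi - \<nu> * pi / 2)) / fact (Suc k)
        * Gamma (\<nu> / 2 * real (Suc k) + 1))
      = 2 / (a * pi * \<nu>) * a / real (Suc k)
        * ((- 1) ^ k * a ^ k / fact k * (sin (pi * z) * Gamma (z + 1)))"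
    unfolding sin_eq Gamma_eq by (simp del: of_nat_Suc)
  also have "\<dots> = (- a) ^ k / fact k * rGamma (- \<nu> * real k / 2 + 1 - \<nu> / 2)"
    unfolding scale rGamma_eq by (simp add: power_minus[of a])
  finally show ?thesis ..
qed

theorem corollary5p1:
  fixes lam \<nu> x t :: real
  assumes "lam > 0" and "0 < \<nu>" and "\<nu> < 2" and "t > 0" and "x \<noteq> 0"
  defines "f \<equiv> (\<lambda>w::real. exp (- w)
      * exp (- (\<bar>x\<bar> * w powr (\<nu>/2) / (lam * t powr (\<nu>/2))) * cos (\<nu> * pi / 2))
      * sin ((\<bar>x\<bar> * w powr (\<nu>/2) / (lam * t powr (\<nu>/2))) * sin (\<nu> * pi / 2)))"
  shows "f integrable_on {0..} \<and>
         u_sol \<nu> lam x t = 1 / (pi * \<nu> * \<bar>x\<bar>) * integral {0..} f"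
proof -
  define a where "a = \<bar>x\<bar> / (lam * t powr (\<nu>/2))"
  have "a > 0"
    using assms by (simp add: a_def)
  have "0 < \<nu> / 2" "\<nu> / 2 < 1"
    using assms by simp_all
  define I where "I = (\<lambda>n. a ^ n * sin (real n * (pi - \<nu> * pi / 2)) / fact n
      * Gamma (\<nu> / 2 * real n + 1))"
  have f_eq: "f = (\<lambda>w. exp (- w) * exp (a * w powr (\<nu>/2) * cos (pi - \<nu> * pi / 2))
      * sin (a * w powr (\<nu>/2) * sin (pi - \<nu> * pi / 2)))"
    by (simp add: f_def a_def)
  note series = integral_exp_sin_powr_sums[OF \<open>a > 0\<close> \<open>0 < \<nu> / 2\<close> \<open>\<nu> / 2 < 1\<close>,
      of "pi - \<nu> * pi / 2", folded f_eq I_def]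
  moreover have "I 0 = 0"
    by (simp add: I_def)
  ultimately have tail: "(\<lambda>k. I (Suc k)) sums integral {0..} f"
    by (simp add: sums_Suc_iff)
  have term_eq: "(- a) ^ k / fact k * rGamma (- \<nu> * real k / 2 + 1 - \<nu> / 2)
      = 2 / (a * pi * \<nu>) * I (Suc k)" for k
    unfolding I_def using \<open>a > 0\<close> by (intro power_div_fact_rGamma_eq \<open>\<nu> > 0\<close>) simp
  have "(\<lambda>k. (- a) ^ k / fact k * rGamma (- \<nu> * real k / 2 + 1 - \<nu> / 2))
      sums (2 / (a * pi * \<nu>) * integral {0..} f)"
    unfolding term_eq by (rule sums_mult[OF tail])
  then have "u_sol \<nu> lam x t = 1 / (2 * lam * t powr (\<nu>/2)) * (2 / (a * pi * \<nu>) * integral {0..} f)"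
    by (simp add: u_sol_def a_def sums_iff)
  also have "\<dots> = 1 / (pi * \<nu> * \<bar>x\<bar>) * integral {0..} f"
    using assms by (simp add: a_def field_simps)
  finally show ?thesis
    using series(1) by simp
qed

end
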